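(* Consider a symmetric two-player Prisoner's Dilemma with payoffs $(a,a)$ for $(C,C)$, $(b,c)$ for $(C,D)$, $(c,b)$ for $(D,C)$ and $(d,d)$ for $(D,D)$, where $c>a>d>b$, and set $\Delta C=c-a>0$ and $\Delta D=d-b>0$. Let both players' tolerances be drawn from the same distribution on $[0,\infty)$ with continuous cumulative distribution function $F$. Then: (i) $\alpha\in[0,1]$ is a symmetric particularly cooperative equilibrium if and only if $1-\alpha=F(\alpha\,\Delta C+(1-\alpha)\,\Delta D)$, and at least one such $\alpha$ exists; (ii) $\alpha=0$ is a symmetric particularly cooperative equilibrium if and only if $F(\Delta D)=1$; (iii) if $\Delta C>\Delta D$, there is exactly one symmetric particularly cooperative equilibrium.
   Context: If a player believes the other player plays $C$ with probability $\alpha$, the gain from defecting rather than cooperating is $\alpha\,\Delta C+(1-\alpha)\,\Delta D$, so a player with tolerance $t$ finds $C$ to be a $t$-best response (i.e., $u(D)\le u(C)+t$) iff $t\ge \alpha\,\Delta C+(1-\alpha)\,\Delta D$. A symmetric particularly cooperative equilibrium is a number $\alpha\in[0,1]$ such that, when each player believes the other cooperates with probability $\alpha$, every tolerance type for which $C$ is a $t$-best response plays $C$, every other type plays $D$ (the only $t$-best response for it), and the resulting overall probability that a player cooperates equals $\alpha$; that is, $\alpha=\Pr_F\big[T\ge \alpha\,\Delta C+(1-\alpha)\,\Delta D\big]$ where $T$ is a tolerance drawn from $F$. *)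

theory Defs
  imports "HOL-Probability.Probability"
begin

text \<open>Gain from defecting rather than cooperating when the opponent is believed
to cooperate with probability alpha.\<close>
definition defect_gain :: "real \<Rightarrow> real \<Rightarrow> real \<Rightarrow> real" where
  "defect_gain dC dD \<alpha> = \<alpha> * dC + (1 - \<alpha>) * dD"

definition C_t_best :: "real \<Rightarrow> real \<Rightarrow> real \<Rightarrow> real \<Rightarrow> bool" where
  "C_t_best dC dD \<alpha> t \<longleftrightarrow> defect_gain dC dD \<alpha> \<le> t"

definition sym_pce :: "real measure \<Rightarrow> real \<Rightarrow> real \<Rightarrow> real \<Rightarrow> bool" where
  "sym_pce M dC dD \<alpha> \<longleftrightarrow> \<alpha> \<in> {0..1} \<and> \<alpha> = measure M {t. C_t_best dC dD \<alpha> t}"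

end

theory Submission
  imports Defs
begin

text \<open>With a continuous tolerance distribution the event "C is a t-best response" has
  probability 1 - F(g(\<alpha>)), g(\<alpha>) the gain from defecting, so equilibria are the roots of
  \<alpha> - 1 + F(g(\<alpha>)) in [0,1]; this function is \<le> 0 at 0 and \<ge> 0 at 1, so a root exists by
  the intermediate value theorem. If \<Delta>C \<ge> \<Delta>D then g, hence F \<circ> g, is nondecreasing,
  while 1 - \<alpha> is strictly decreasing, so the root is unique.\<close>

context real_distribution
begin

lemma prob_atLeast_eq_1_minus_cdf:
  assumes "isCont (cdf M) x"
  shows "prob {t. x \<le> t} = 1 - cdf M x"
proof -
  have "prob {..x} = prob ({..<x} \<union> {x})"
    by (metis ivl_disj_un_singleton(2))
  also have "\<dots> = prob {..<x} + prob {x}"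
    by (rule finite_measure_Union) auto
  finally have "prob {..x} = prob {..<x}"
    using isCont_cdf assms by simp
  moreover have "{t. x \<le> t} = space M - {..<x}"
    by auto
  ultimately show ?thesis
    using prob_compl[of "{..<x}"] by (simp add: cdf_def)
qed

lemma sym_pce_iff_cdf:
  assumes "continuous_on UNIV (cdf M)"
  shows "sym_pce M dC dD \<alpha> \<longleftrightarrow> \<alpha> \<in> {0..1} \<and> 1 - \<alpha> = cdf M (defect_gain dC dD \<alpha>)"
  using prob_atLeast_eq_1_minus_cdf[of "defect_gain dC dD \<alpha>"] assms
  by (auto simp: sym_pce_def C_t_best_def continuous_on_eq_continuous_at)

lemma sym_pce_exists:
  assumes "continuous_on UNIV (cdf M)"
  shows "\<exists>\<alpha>. sym_pce M dC dD \<alpha>"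
proof -
  define h where "h \<alpha> = \<alpha> - 1 + cdf M (defect_gain dC dD \<alpha>)" for \<alpha>
  have "continuous_on {0..1} (defect_gain dC dD)"
    unfolding defect_gain_def by (intro continuous_intros)
  then have "continuous_on {0..1} h"
    unfolding h_def by (intro continuous_intros continuous_on_compose2[OF assms]) auto
  moreover have "h 0 \<le> 0" "0 \<le> h 1"
    using cdf_bounded_prob cdf_nonneg by (auto simp: h_def)
  ultimately obtain \<alpha> where "\<alpha> \<in> {0..1}" "h \<alpha> = 0"
    using IVT'[of h 0 0 1] by auto
  then show ?thesis
    using sym_pce_iff_cdf[OF assms] by (auto simp: h_def)
qed

lemma sym_pce_zero_iff:
  assumes "continuous_on UNIV (cdf M)"
  shows "sym_pce M dC dD 0 \<longleftrightarrow> cdf M dD = 1"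
  using sym_pce_iff_cdf[OF assms] by (auto simp: defect_gain_def)

lemma defect_gain_mono:
  assumes "dD \<le> dC" and "\<alpha> \<le> \<beta>"
  shows "defect_gain dC dD \<alpha> \<le> defect_gain dC dD \<beta>"
  using mult_right_mono[OF assms(2), of "dC - dD"] assms(1)
  by (simp add: defect_gain_def algebra_simps)

lemma sym_pce_unique:
  assumes "continuous_on UNIV (cdf M)" and "dD \<le> dC"
    and "sym_pce M dC dD \<alpha>" and "sym_pce M dC dD \<beta>"
  shows "\<alpha> = \<beta>"
proof -
  have "1 - \<alpha> \<le> 1 - \<beta>" if "sym_pce M dC dD \<alpha>" "sym_pce M dC dD \<beta>" "\<alpha> \<le> \<beta>" for \<alpha> \<beta>
    using that sym_pce_iff_cdf[OF assms(1)] cdf_nondecreasing defect_gain_mono[OF assms(2)]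
    by metis
  then show ?thesis
    using assms(3,4) by (smt (verit))
qed

end

theorem theorem4p1:
  fixes a b c d :: real and M :: "real measure" and F :: "real \<Rightarrow> real"
  assumes "c > a" and "a > d" and "d > b"
    and "prob_space M" and "sets M = sets borel"
    and "measure M {..<0} = 0"
    and "\<And>x. F x = measure M {..x}"
    and "continuous_on UNIV F"
  shows "(\<forall>\<alpha>. sym_pce M (c - a) (d - b) \<alpha> \<longleftrightarrow>
              \<alpha> \<in> {0..1} \<and> 1 - \<alpha> = F (\<alpha> * (c - a) + (1 - \<alpha>) * (d - b)))
         \<and> (\<exists>\<alpha>. sym_pce M (c - a) (d - b) \<alpha>)
         \<and> (sym_pce M (c - a) (d - b) 0 \<longleftrightarrow> F (d - b) = 1)
         \<and> (c - a > d - b \<longrightarrow> (\<exists>!\<alpha>. sym_pce M (c - a) (d - b) \<alpha>))"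
proof -
  interpret real_distribution M
    using assms(4,5) by (simp add: real_distribution_def real_distribution_axioms_def)
  have F_eq: "F = cdf M"
    using assms(7) by (auto simp: cdf_def)
  note cont = assms(8)[unfolded F_eq]
  have "\<exists>!\<alpha>. sym_pce M (c - a) (d - b) \<alpha>" if "c - a > d - b"
    using sym_pce_exists[OF cont] sym_pce_unique[OF cont] that
    by (metis less_imp_le ex_ex1I)
  then show ?thesis
    using sym_pce_iff_cdf[OF cont] sym_pce_exists[OF cont] sym_pce_zero_iff[OF cont]
    by (simp add: F_eq defect_gain_def)
qed

end
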